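(* Let $\omega$ be a rectilinearly-convex obstacle that is a rectangle (i.e. has exactly four extreme corners). Then $\{d\}$ is a minimum skeleton for $\omega$, where $d$ is either of the two diagonals of $\omega$.
   Context: An obstacle $\omega$ is a simple polygon in $\mathbb{R}^2$ (a closed, bounded polygonal region without holes whose boundary does not intersect itself), assumed in general position (no three of its vertices are collinear); vertices and edges of $\omega$ are those of its boundary. $\omega$ is rectilinear if each edge is horizontal or vertical, and a rectilinear obstacle is rectilinearly-convex if any two points of $\omega$ can be joined by a shortest rectilinear path (made of horizontal and vertical segments, of minimum $\ell_1$ length) contained in $\omega$. A corner point of a rectilinear path is a point where a horizontal and a vertical segment of the path meet. A set $S$ of closed line segments is inside $\omega$ if the union of its elements is contained in $\omega$. Such an $S$ is a skeleton for $\omega$ if for every pair of points $p,q$ not in the interior of $\omega$ such that every shortest rectilinear path between $p$ and $q$ with at most one corner point meets the interior of $\omega$, each such path intersects some element of $S$; a minimum skeleton is one with the fewest segments. $B(\omega)$ is the smallest closed axis-parallel rectangle containing $\omega$; the extreme edges are the edges of $\omega$ lying on the boundary of $B(\omega)$; an extreme corner is a vertex of $\omega$ that is a common endpoint of two extreme edges. A diagonal of $\omega$ is a line segment contained in $\omega$ joining two diagonally opposite extreme corners. *)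

theory Defs
  imports "HOL-Analysis.Analysis"
begin

type_synonym pt = "real \<times> real"

definition l1 :: "pt \<Rightarrow> pt \<Rightarrow> real" where
  "l1 u v = \<bar>fst u - fst v\<bar> + \<bar>snd u - snd v\<bar>"

text \<open>A rectilinear path is a polygonal chain given by its list of vertices; consecutive
  vertices are distinct and joined by a horizontal or vertical segment.\<close>
definition axis_step :: "pt \<Rightarrow> pt \<Rightarrow> bool" where
  "axis_step u v \<longleftrightarrow> u \<noteq> v \<and> (fst u = fst v \<or> snd u = snd v)"

definition rpath :: "pt \<Rightarrow> pt \<Rightarrow> pt list \<Rightarrow> bool" where
  "rpath p q vs \<longleftrightarrow> vs \<noteq> [] \<and> hd vs = p \<and> last vs = q \<and>
     (\<forall>i. Suc i < length vs \<longrightarrow> axis_step (vs ! i) (vs ! Suc i))"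

definition rlen :: "pt list \<Rightarrow> real" where
  "rlen vs = (\<Sum>i<length vs - 1. l1 (vs ! i) (vs ! Suc i))"

definition path_set :: "pt list \<Rightarrow> pt set" where
  "path_set vs = set vs \<union> (\<Union>i\<in>{i. Suc i < length vs}. closed_segment (vs ! i) (vs ! Suc i))"

definition shortest_rpath :: "pt \<Rightarrow> pt \<Rightarrow> pt list \<Rightarrow> bool" where
  "shortest_rpath p q vs \<longleftrightarrow> rpath p q vs \<and> (\<forall>ws. rpath p q ws \<longrightarrow> rlen vs \<le> rlen ws)"

definition horiz :: "pt \<Rightarrow> pt \<Rightarrow> bool" where
  "horiz u v \<longleftrightarrow> snd u = snd v"

definition corner_points :: "pt list \<Rightarrow> pt set" where
  "corner_points vs = {vs ! Suc i | i. Suc (Suc i) < length vs \<and>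
       horiz (vs ! i) (vs ! Suc i) \<noteq> horiz (vs ! Suc i) (vs ! Suc (Suc i))}"

definition short_L_path :: "pt \<Rightarrow> pt \<Rightarrow> pt list \<Rightarrow> bool" where
  "short_L_path p q vs \<longleftrightarrow> shortest_rpath p q vs \<and> card (corner_points vs) \<le> 1"

text \<open>Segments are represented by their endpoint pairs.\<close>
definition seg :: "pt \<times> pt \<Rightarrow> pt set" where
  "seg s = closed_segment (fst s) (snd s)"

definition inside :: "(pt \<times> pt) set \<Rightarrow> pt set \<Rightarrow> bool" where
  "inside S \<omega> \<longleftrightarrow> (\<Union>s\<in>S. seg s) \<subseteq> \<omega>"

definition skeleton :: "pt set \<Rightarrow> (pt \<times> pt) set \<Rightarrow> bool" where
  "skeleton \<omega> S \<longleftrightarrow> inside S \<omega> \<and>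
     (\<forall>p q. p \<notin> interior \<omega> \<and> q \<notin> interior \<omega> \<and>
        (\<forall>vs. short_L_path p q vs \<longrightarrow> path_set vs \<inter> interior \<omega> \<noteq> {}) \<longrightarrow>
        (\<forall>vs. short_L_path p q vs \<longrightarrow> (\<exists>s\<in>S. path_set vs \<inter> seg s \<noteq> {})))"

definition minimum_skeleton :: "pt set \<Rightarrow> (pt \<times> pt) set \<Rightarrow> bool" where
  "minimum_skeleton \<omega> S \<longleftrightarrow> finite S \<and> skeleton \<omega> S \<and>
     (\<forall>S'. finite S' \<and> skeleton \<omega> S' \<longrightarrow> card S \<le> card S')"

definition rect :: "real \<Rightarrow> real \<Rightarrow> real \<Rightarrow> real \<Rightarrow> pt set" where
  "rect a b c e = {z. a \<le> fst z \<and> fst z \<le> b \<and> c \<le> snd z \<and> snd z \<le> e}"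

end

theory Submission
  imports Defs
begin

(*
  A shortest rectilinear path from p to q with at most one corner contains one of the two
  L-shaped routes from p to q, through the corner (fst q, snd p) or (fst p, snd q), and each of
  these routes is itself such a path. So for p and q outside the interior of the rectangle, the
  hypothesis of the skeleton property says that both L-routes enter the interior, and it suffices
  to show that both of them then meet the diagonal d. Writing d as the graph x = phi y of an affine
  bijection phi, the map (x, y) |-> (x, phi y) turns the rectangle into a square and d into its main
  diagonal, where the claim is a case analysis on the coordinates of p and q. Finally, the empty
  set is no skeleton, because the L-route along the horizontal midline crosses the interior.
*)

section \<open>Segments\<close>

lemma closed_segment_subset_Un_if_collinear:
  fixes u v w :: "'a::euclidean_space"
  assumes "collinear {u, v, w}"
  shows "closed_segment u w \<subseteq> closed_segment u v \<union> closed_segment v w"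
proof -
  from assms consider "u \<in> closed_segment v w" | "v \<in> closed_segment u w" | "w \<in> closed_segment u v"
    by (auto simp: collinear_between_cases between_mem_segment closed_segment_commute)
  then show ?thesis
  proof cases
    case 1
    then have "closed_segment u w \<subseteq> closed_segment v w"
      by (simp add: subset_closed_segment)
    then show ?thesis by blast
  next
    case 2
    then show ?thesis by (simp add: Un_closed_segment)
  next
    case 3
    then have "closed_segment u w \<subseteq> closed_segment u v"
      by (simp add: subset_closed_segment)
    then show ?thesis by blast
  qed
qed

lemma collinear_horizontal_line: "collinear {z :: pt. snd z = t}"
proof -
  have "z = (0, t) + fst z *\<^sub>R (1, 0)" if "snd z = t" for z :: pt
    using that by (cases z) simp
  then show ?thesis
    unfolding collinear_alt by blast
qed

lemma collinear_vertical_line: "collinear {z :: pt. fst z = t}"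
proof -
  have "z = (t, 0) + snd z *\<^sub>R (0, 1)" if "fst z = t" for z :: pt
    using that by (cases z) simp
  then show ?thesis
    unfolding collinear_alt by blast
qed

lemma closed_segment_real_eq_atLeastAtMost:
  fixes x y :: real
  shows "closed_segment x y = {min x y..max x y}"
  by (simp add: closed_segment_eq_real_ivl)

lemma closed_segment_horizontal:
  "closed_segment (x1, y) (x2, y) = closed_segment x1 x2 \<times> {y :: real}"
  by (auto simp: in_segment algebra_simps)

lemma closed_segment_vertical:
  "closed_segment (x, y1) (x, y2) = {x :: real} \<times> closed_segment y1 y2"
  by (auto simp: in_segment algebra_simps)

lemma affine_image_closed_segment:
  "linear f \<Longrightarrow> (\<lambda>x. w + f x) ` closed_segment u v = closed_segment (w + f u) (w + f v)"
  by (simp add: closed_segment_translation closed_segment_linear_image image_image)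

lemma affine_real_image_closed_segment:
  fixes \<alpha> \<beta> u v :: real
  shows "(\<lambda>y. \<alpha> + \<beta> * y) ` closed_segment u v = closed_segment (\<alpha> + \<beta> * u) (\<alpha> + \<beta> * v)"
  using linear_times [of \<beta>] by (rule affine_image_closed_segment)

lemma interval_images_of_segment_map:
  fixes \<phi> :: "real \<Rightarrow> real"
  assumes "inj \<phi>" "\<And>u v. \<phi> ` closed_segment u v = closed_segment (\<phi> u) (\<phi> v)"
    and "{\<phi> c, \<phi> e} = {a, b}" "a \<le> b" "c \<le> e"
  shows "\<phi> ` {c..e} = {a..b}" "\<phi> ` {c<..<e} = {a<..<b}"
proof -
  have "closed_segment (\<phi> c) (\<phi> e) = closed_segment a b"
    using assms(3) by (auto simp: doubleton_eq_iff closed_segment_commute)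
  then show closed: "\<phi> ` {c..e} = {a..b}"
    using assms(2,4,5) by (simp flip: closed_segment_eq_real_ivl1)
  have "{c<..<e} = {c..e} - {c, e}" "{a<..<b} = {a..b} - {a, b}"
    using assms(4,5) by auto
  then show "\<phi> ` {c<..<e} = {a<..<b}"
    using assms(1,3) closed by (simp add: image_set_diff)
qed

section \<open>Shortest rectilinear paths with at most one corner\<close>

lemma successive_eq_imp_eq:
  assumes "l \<le> i" "\<And>t. l \<le> t \<Longrightarrow> t < i \<Longrightarrow> g (Suc t) = g t"
  shows "g i = g l"
  using assms by (induction i rule: dec_induct) auto

lemma at_most_one_change:
  fixes h :: "nat \<Rightarrow> bool"
  assumes "card {i. Suc i < m \<and> h i \<noteq> h (Suc i)} \<le> 1"
  obtains j where "j \<le> m" "\<And>i. i < j \<Longrightarrow> h i = h 0" "\<And>i. j \<le> i \<Longrightarrow> i < m \<Longrightarrow> h i \<noteq> h 0"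
proof -
  let ?C = "{i. Suc i < m \<and> h i \<noteq> h (Suc i)}"
  have "finite ?C"
    by (rule finite_subset [of _ "{..<m}"]) auto
  moreover have "card ?C = 0 \<or> card ?C = Suc 0"
    using assms by linarith
  ultimately consider "?C = {}" | k where "?C = {k}"
    by (auto simp: card_1_singleton_iff)
  then show ?thesis
  proof cases
    case 1
    have stable: "h (Suc t) = h t" if "Suc t < m" for t
    proof -
      have "t \<notin> ?C" using 1 by simp
      with that show ?thesis by simp
    qed
    show ?thesis
    proof (rule that [of m])
      show "h i = h 0" if "i < m" for i
        by (rule successive_eq_imp_eq [of 0 i h]) (use stable that in auto)
    qed auto
  next
    case (2 k)
    then have k: "Suc k < m" "h k \<noteq> h (Suc k)"
      by auto
    have stable: "h (Suc t) = h t" if "Suc t < m" "t \<noteq> k" for t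
    proof -
      have "t \<notin> ?C" using 2 \<open>t \<noteq> k\<close> by simp
      with that show ?thesis by simp
    qed
    have before: "h i = h 0" if "i \<le> k" for i
      by (rule successive_eq_imp_eq [of 0 i h]) (use stable that k in auto)
    have after: "h i = h (Suc k)" if "Suc k \<le> i" "i < m" for i
      by (rule successive_eq_imp_eq [of "Suc k" i h]) (use stable that in auto)
    show ?thesis
    proof (rule that [of "Suc k"])
      show "Suc k \<le> m"
        using k by simp
      show "h i = h 0" if "i < Suc k" for i
        by (rule before) (use that in simp)
      show "h i \<noteq> h 0" if "Suc k \<le> i" "i < m" for i
        using after [OF that] before [of k] k by simp
    qed
  qed
qed

lemma l1_triangle: "l1 u w \<le> l1 u v + l1 v w"
  unfolding l1_def by linarith

lemma l1_pos: "u \<noteq> v \<Longrightarrow> 0 < l1 u v"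
  unfolding l1_def by (cases u; cases v) auto

lemma l1_le_sum_steps:
  "j \<le> k \<Longrightarrow> l1 (vs ! j) (vs ! k) \<le> (\<Sum>i = j..<k. l1 (vs ! i) (vs ! Suc i))"
proof (induction k rule: dec_induct)
  case base
  then show ?case by (simp add: l1_def)
next
  case (step k)
  then show ?case
    using l1_triangle [of "vs ! j" "vs ! Suc k" "vs ! k"] by simp
qed

lemma rlen_eq_sum: "rlen vs = (\<Sum>i = 0..<length vs - 1. l1 (vs ! i) (vs ! Suc i))"
  by (simp add: rlen_def atLeast0LessThan)

lemma rpath_nth_ends:
  "rpath p q vs \<Longrightarrow> vs \<noteq> [] \<and> vs ! 0 = p \<and> vs ! (length vs - 1) = q"
  by (auto simp: rpath_def hd_conv_nth last_conv_nth)

lemma l1_le_rlen: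
  assumes "rpath p q vs"
  shows "l1 p q \<le> rlen vs"
  using rpath_nth_ends [OF assms] l1_le_sum_steps [of 0 "length vs - 1" vs]
  by (simp add: rlen_eq_sum)

lemma rpath_via_corner:
  assumes "k = (fst q, snd p) \<or> k = (fst p, snd q)"
  obtains vs where "rpath p q vs" "rlen vs = l1 p q" "length vs \<le> 3"
    "path_set vs = closed_segment p k \<union> closed_segment k q"
proof -
  have "l1 p k + l1 k q = l1 p q"
    using assms by (auto simp: l1_def)
  consider "p = q" | "p \<noteq> q" "k = p \<or> k = q" | "k \<noteq> p" "k \<noteq> q"
    by blast
  then show ?thesis
  proof cases
    case 1
    then have "k = p" using assms by auto
    have "path_set [p] = {p}" by (simp add: path_set_def)
    then show ?thesis
      using that [of "[p]"] 1 \<open>k = p\<close> by (simp add: rpath_def rlen_def l1_def)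
  next
    case 2
    then have "axis_step p q" using assms by (auto simp: axis_step_def prod_eq_iff)
    moreover have "path_set [p, q] = closed_segment p q"
      by (auto simp: path_set_def)
    moreover have "closed_segment p k \<union> closed_segment k q = closed_segment p q"
      using 2 by auto
    ultimately show ?thesis
      using that [of "[p, q]"] by (simp add: rpath_def rlen_def)
  next
    case 3
    then have "axis_step p k" "axis_step k q"
      using assms by (auto simp: axis_step_def prod_eq_iff)
    moreover have "path_set [p, k, q] = closed_segment p k \<union> closed_segment k q"
    proof -
      have "{i. Suc i < length [p, k, q]} = {0, 1}" by auto
      then show ?thesis by (auto simp: path_set_def)
    qed
    ultimately show ?thesis
      using that [of "[p, k, q]"] \<open>l1 p k + l1 k q = l1 p q\<close>
      by (simp add: rpath_def rlen_def less_Suc_eq numeral_3_eq_3 lessThan_Suc)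
  qed
qed

lemma shortest_rpath_iff: "shortest_rpath p q vs \<longleftrightarrow> rpath p q vs \<and> rlen vs = l1 p q"
proof -
  obtain ws where ws: "rpath p q ws" "rlen ws = l1 p q"
    by (rule rpath_via_corner [of "(fst q, snd p)" q p]) simp_all
  show ?thesis
  proof
    assume "shortest_rpath p q vs"
    then have "rpath p q vs" "rlen vs \<le> l1 p q"
      using ws unfolding shortest_rpath_def by auto
    then show "rpath p q vs \<and> rlen vs = l1 p q"
      using l1_le_rlen [of p q vs] by simp
  next
    assume "rpath p q vs \<and> rlen vs = l1 p q"
    then show "shortest_rpath p q vs"
      unfolding shortest_rpath_def using l1_le_rlen by auto
  qed
qed

lemma card_corner_points_le_one:
  assumes "length vs \<le> 3"
  shows "card (corner_points vs) \<le> 1"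
proof -
  have "corner_points vs \<subseteq> {vs ! 1}"
  proof
    fix z assume "z \<in> corner_points vs"
    then obtain i where "z = vs ! Suc i" "Suc (Suc i) < length vs"
      by (auto simp: corner_points_def)
    moreover from this(2) assms have "i = 0" by linarith
    ultimately show "z \<in> {vs ! 1}" by simp
  qed
  then have "card (corner_points vs) \<le> card {vs ! 1}"
    by (intro card_mono) simp_all
  then show ?thesis
    by simp
qed

lemma short_L_path_via_corner:
  assumes "k = (fst q, snd p) \<or> k = (fst p, snd q)"
  obtains vs where "short_L_path p q vs" "path_set vs = closed_segment p k \<union> closed_segment k q"
proof -
  obtain vs where "rpath p q vs" "rlen vs = l1 p q" "length vs \<le> 3"
    "path_set vs = closed_segment p k \<union> closed_segment k q"
    by (rule rpath_via_corner [OF assms])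
  then show ?thesis
    using that [of vs] card_corner_points_le_one [of vs] by (simp add: short_L_path_def shortest_rpath_iff)
qed

lemma shortest_rpath_distinct:
  assumes "shortest_rpath p q vs"
  shows "distinct vs"
proof -
  let ?step = "\<lambda>i. l1 (vs ! i) (vs ! Suc i)"
  let ?m = "length vs - 1"
  have path: "rpath p q vs" and len: "rlen vs = l1 p q"
    using assms by (auto simp: shortest_rpath_iff)
  have *: "vs ! i \<noteq> vs ! j" if "i < j" "j < length vs" for i j
  proof
    assume same: "vs ! i = vs ! j"
    have "vs ! i \<noteq> vs ! Suc i"
      using path that by (auto simp: rpath_def axis_step_def)
    then have "0 < ?step i"
      by (rule l1_pos)
    also have "?step i \<le> sum ?step {i..<j}"
      by (rule member_le_sum) (use that in \<open>auto simp: l1_def\<close>)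
    finally have detour: "0 < sum ?step {i..<j}" .
    have "l1 p q \<le> l1 p (vs ! i) + l1 (vs ! j) q"
      using l1_triangle [of p q "vs ! i"] same by simp
    also have "\<dots> \<le> sum ?step {0..<i} + sum ?step {j..<?m}"
      using l1_le_sum_steps [of 0 i vs] l1_le_sum_steps [of j ?m vs] rpath_nth_ends [OF path] that
      by (intro add_mono) auto
    also have "\<dots> < sum ?step {0..<i} + sum ?step {i..<j} + sum ?step {j..<?m}"
      using detour by simp
    also have "\<dots> = rlen vs"
      using that by (simp add: rlen_eq_sum sum.atLeastLessThan_concat)
    finally show False
      using len by simp
  qed
  show ?thesis
    unfolding distinct_conv_nth
  proof (intro allI impI)
    fix i j assume "i < length vs" "j < length vs" "i \<noteq> j"
    then show "vs ! i \<noteq> vs ! j"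
      using * [of i j] * [of j i] by (cases "i < j") auto
  qed
qed

lemma card_direction_changes_le_one:
  assumes "short_L_path p q vs"
  shows "card {i. Suc (Suc i) < length vs \<and>
           horiz (vs ! i) (vs ! Suc i) \<noteq> horiz (vs ! Suc i) (vs ! Suc (Suc i))} \<le> 1"
    (is "card ?C \<le> 1")
proof -
  have "shortest_rpath p q vs"
    using assms by (simp add: short_L_path_def)
  then have "distinct vs"
    by (rule shortest_rpath_distinct)
  then have "inj_on (\<lambda>i. vs ! Suc i) ?C"
    by (auto simp: inj_on_def nth_eq_iff_index_eq)
  moreover have "corner_points vs = (\<lambda>i. vs ! Suc i) ` ?C"
    by (auto simp: corner_points_def)
  ultimately show ?thesis
    using assms by (simp add: short_L_path_def card_image)
qed

lemma closed_segment_subset_path_set: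
  assumes "collinear A" "l \<le> r" "r < length vs" "\<And>i. l \<le> i \<Longrightarrow> i \<le> r \<Longrightarrow> vs ! i \<in> A"
  shows "closed_segment (vs ! l) (vs ! r) \<subseteq> path_set vs"
  using assms(2-4)
proof (induction r rule: dec_induct)
  case base
  then show ?case
    by (simp add: path_set_def)
next
  case (step r)
  have "closed_segment (vs ! l) (vs ! Suc r) \<subseteq>
        closed_segment (vs ! l) (vs ! r) \<union> closed_segment (vs ! r) (vs ! Suc r)"
    by (intro closed_segment_subset_Un_if_collinear collinear_subset [OF assms(1)])
      (use step in auto)
  moreover have "closed_segment (vs ! r) (vs ! Suc r) \<subseteq> path_set vs"
    using step by (auto simp: path_set_def)
  ultimately show ?case
    using step by auto
qed

lemma axis_parallel_run_subset_path_set: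
  fixes f :: "pt \<Rightarrow> real"
  assumes axis: "f = fst \<or> f = snd" and "l \<le> r" "r < length vs"
    and steps: "\<And>t. l \<le> t \<Longrightarrow> t < r \<Longrightarrow> f (vs ! Suc t) = f (vs ! t)"
  shows "closed_segment (vs ! l) (vs ! r) \<subseteq> path_set vs \<and> f (vs ! r) = f (vs ! l)"
proof
  have same: "f (vs ! i) = f (vs ! l)" if "l \<le> i" "i \<le> r" for i
    by (rule successive_eq_imp_eq [of l i "\<lambda>i. f (vs ! i)"]) (use that steps in auto)
  show "f (vs ! r) = f (vs ! l)"
    using same [of r] \<open>l \<le> r\<close> by simp
  have line: "collinear {z. f z = f (vs ! l)}"
    using axis collinear_horizontal_line collinear_vertical_line by auto
  have on_line: "vs ! i \<in> {z. f z = f (vs ! l)}" if "l \<le> i" "i \<le> r" for i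
    using same [OF that] by simp
  show "closed_segment (vs ! l) (vs ! r) \<subseteq> path_set vs"
    by (rule closed_segment_subset_path_set [OF line \<open>l \<le> r\<close> \<open>r < length vs\<close> on_line])
qed

text \<open>The L-route from \<open>p\<close> to \<open>q\<close> starts horizontally; the other L-route between the two
  points is \<open>L_route q p\<close>.\<close>

definition L_route :: "pt \<Rightarrow> pt \<Rightarrow> pt set" where
  "L_route p q = closed_segment p (fst q, snd p) \<union> closed_segment (fst q, snd p) q"

lemma short_L_paths_onto_L_routes:
  obtains vs ws where "short_L_path p q vs" "path_set vs = L_route p q"
    "short_L_path p q ws" "path_set ws = L_route q p"
proof -
  obtain vs where "short_L_path p q vs" "path_set vs = L_route p q"
    by (rule short_L_path_via_corner [of "(fst q, snd p)" q p]) (simp_all add: L_route_def)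
  moreover obtain ws where "short_L_path p q ws" "path_set ws = L_route q p"
    by (rule short_L_path_via_corner [of "(fst p, snd q)" q p])
      (simp_all add: L_route_def closed_segment_commute Un_commute)
  ultimately show ?thesis
    by (rule that)
qed

lemma short_L_path_two_runs:
  assumes "short_L_path p q vs"
  obtains j f g where "j < length vs" "(f, g) = (snd, fst) \<or> (f, g) = (fst, snd)"
    "\<And>i. i < j \<Longrightarrow> f (vs ! Suc i) = f (vs ! i)"
    "\<And>i. j \<le> i \<Longrightarrow> Suc i < length vs \<Longrightarrow> g (vs ! Suc i) = g (vs ! i)"
proof -
  define m where "m = length vs - 1"
  define h where "h i = horiz (vs ! i) (vs ! Suc i)" for i
  have path: "rpath p q vs"
    using assms by (simp add: short_L_path_def shortest_rpath_iff)
  have "m < length vs"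
    using rpath_nth_ends [OF path] by (simp add: m_def)
  have horizontal: "snd (vs ! Suc i) = snd (vs ! i)" if "h i" for i
    using that by (simp add: h_def horiz_def)
  have vertical: "fst (vs ! Suc i) = fst (vs ! i)" if "Suc i < length vs" "\<not> h i" for i
  proof -
    have "axis_step (vs ! i) (vs ! Suc i)"
      using path that(1) by (simp add: rpath_def)
    then show ?thesis
      using that(2) by (auto simp: axis_step_def h_def horiz_def)
  qed
  have "{i. Suc i < m \<and> h i \<noteq> h (Suc i)} =
        {i. Suc (Suc i) < length vs \<and> horiz (vs ! i) (vs ! Suc i) \<noteq> horiz (vs ! Suc i) (vs ! Suc (Suc i))}"
    by (auto simp: h_def m_def)
  then have "card {i. Suc i < m \<and> h i \<noteq> h (Suc i)} \<le> 1"
    using card_direction_changes_le_one [OF assms] by simp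
  then obtain j where j: "j \<le> m" "\<And>i. i < j \<Longrightarrow> h i = h 0" "\<And>i. j \<le> i \<Longrightarrow> i < m \<Longrightarrow> h i \<noteq> h 0"
    by (rule at_most_one_change) blast
  have "j < length vs"
    using j(1) \<open>m < length vs\<close> by simp
  have late: "j \<le> i \<Longrightarrow> Suc i < length vs \<Longrightarrow> h i \<noteq> h 0" for i
    using j(3) by (simp add: m_def)
  show ?thesis
  proof (cases "h 0")
    case True
    show ?thesis
    proof (rule that [of j snd fst])
      show "snd (vs ! Suc i) = snd (vs ! i)" if "i < j" for i
        using horizontal j(2) [OF that] True by simp
      show "fst (vs ! Suc i) = fst (vs ! i)" if "j \<le> i" "Suc i < length vs" for i
        using vertical [OF that(2)] late [OF that] True by simp
    qed (simp_all add: \<open>j < length vs\<close>)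
  next
    case False
    show ?thesis
    proof (rule that [of j fst snd])
      show "fst (vs ! Suc i) = fst (vs ! i)" if "i < j" for i
        using vertical j(2) [OF that] False that \<open>j < length vs\<close> by simp
      show "snd (vs ! Suc i) = snd (vs ! i)" if "j \<le> i" "Suc i < length vs" for i
        using horizontal late [OF that] False by simp
    qed (simp_all add: \<open>j < length vs\<close>)
  qed
qed

lemma short_L_path_covers_L_route:
  assumes "short_L_path p q vs"
  shows "L_route p q \<subseteq> path_set vs \<or> L_route q p \<subseteq> path_set vs"
proof -
  define m where "m = length vs - 1"
  have "rpath p q vs"
    using assms by (simp add: short_L_path_def shortest_rpath_iff)
  then have ends: "vs ! 0 = p" "vs ! m = q" "m < length vs"
    using rpath_nth_ends by (auto simp: m_def)
  obtain j f g where j: "j < length vs" and axes: "(f, g) = (snd, fst) \<or> (f, g) = (fst, snd)"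
    and first_run: "\<And>i. i < j \<Longrightarrow> f (vs ! Suc i) = f (vs ! i)"
    and second_run: "\<And>i. j \<le> i \<Longrightarrow> Suc i < length vs \<Longrightarrow> g (vs ! Suc i) = g (vs ! i)"
    using short_L_path_two_runs [OF assms] by blast
  have first: "closed_segment (vs ! 0) (vs ! j) \<subseteq> path_set vs \<and> f (vs ! j) = f (vs ! 0)"
    by (rule axis_parallel_run_subset_path_set [of f 0 j]) (use axes j first_run in auto)
  have second: "closed_segment (vs ! j) (vs ! m) \<subseteq> path_set vs \<and> g (vs ! m) = g (vs ! j)"
    by (rule axis_parallel_run_subset_path_set [of g j m])
      (use axes j ends(3) second_run in \<open>auto simp: m_def\<close>)
  from axes show ?thesis
  proof
    assume "(f, g) = (snd, fst)"
    then have "vs ! j = (fst q, snd p)"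
      using first second ends by (simp add: prod_eq_iff)
    then show ?thesis
      using first second ends by (simp add: L_route_def)
  next
    assume "(f, g) = (fst, snd)"
    then have "vs ! j = (fst p, snd q)"
      using first second ends by (simp add: prod_eq_iff)
    then show ?thesis
      using first second ends by (simp add: L_route_def closed_segment_commute)
  qed
qed

section \<open>L-routes and the diagonal of a rectangle\<close>

lemma L_route_eq_Times:
  "L_route (x1, y1) (x2, y2) = closed_segment x1 x2 \<times> {y1} \<union> {x2} \<times> closed_segment y1 y2"
  by (simp add: L_route_def closed_segment_horizontal closed_segment_vertical)

text \<open>With \<open>p = (x1, y1)\<close> and \<open>q = (x2, y2)\<close>: if \<open>p\<close> and \<open>q\<close> lie outside the open square
  \<open>{a<..<b} \<times> {a<..<b}\<close> and both L-routes enter it, then \<open>L_route p q\<close> meets the diagonal.\<close>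

lemma square_L_routes_arith:
  fixes a b x1 y1 x2 y2 :: real
  assumes "\<not> (a < x1 \<and> x1 < b \<and> a < y1 \<and> y1 < b)" "\<not> (a < x2 \<and> x2 < b \<and> a < y2 \<and> y2 < b)"
    and "(a < y1 \<and> y1 < b \<and> min x1 x2 < b \<and> a < max x1 x2) \<or>
         (a < x2 \<and> x2 < b \<and> min y1 y2 < b \<and> a < max y1 y2)"
    and "(a < x1 \<and> x1 < b \<and> min y1 y2 < b \<and> a < max y1 y2) \<or>
         (a < y2 \<and> y2 < b \<and> min x1 x2 < b \<and> a < max x1 x2)"
  shows "(a \<le> y1 \<and> y1 \<le> b \<and> min x1 x2 \<le> y1 \<and> y1 \<le> max x1 x2) \<or>
         (a \<le> x2 \<and> x2 \<le> b \<and> min y1 y2 \<le> x2 \<and> x2 \<le> max y1 y2)"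
  using assms unfolding min_def max_def by (auto split: if_splits)

lemma L_route_meets_square_diagonal:
  fixes p q :: pt and a b :: real
  assumes "p \<notin> {a<..<b} \<times> {a<..<b}" "q \<notin> {a<..<b} \<times> {a<..<b}"
    and "L_route p q \<inter> ({a<..<b} \<times> {a<..<b}) \<noteq> {}"
    and "L_route q p \<inter> ({a<..<b} \<times> {a<..<b}) \<noteq> {}"
  shows "L_route p q \<inter> (\<lambda>t. (t, t)) ` {a..b} \<noteq> {}"
proof -
  obtain x1 y1 x2 y2 where pq: "p = (x1, y1)" "q = (x2, y2)" by fastforce
  have meets: "{s..t} \<inter> {a<..<b} \<noteq> {} \<Longrightarrow> s < b \<and> a < t" for s t :: real
    by auto
  have "(a \<le> y1 \<and> y1 \<le> b \<and> min x1 x2 \<le> y1 \<and> y1 \<le> max x1 x2) \<or>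
        (a \<le> x2 \<and> x2 \<le> b \<and> min y1 y2 \<le> x2 \<and> x2 \<le> max y1 y2)"
  proof (rule square_L_routes_arith)
    show "(a < y1 \<and> y1 < b \<and> min x1 x2 < b \<and> a < max x1 x2) \<or>
         (a < x2 \<and> x2 < b \<and> min y1 y2 < b \<and> a < max y1 y2)"
      using assms(3) meets unfolding pq L_route_eq_Times closed_segment_real_eq_atLeastAtMost
      by (auto simp: Int_Un_distrib2 Times_Int_Times)
    show "(a < x1 \<and> x1 < b \<and> min y1 y2 < b \<and> a < max y1 y2) \<or>
         (a < y2 \<and> y2 < b \<and> min x1 x2 < b \<and> a < max x1 x2)"
      using assms(4) meets unfolding pq L_route_eq_Times closed_segment_real_eq_atLeastAtMost
      by (auto simp: Int_Un_distrib2 Times_Int_Times min.commute max.commute)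
  qed (use assms(1,2) pq in auto)
  then consider "y1 \<in> {a..b}" "(y1, y1) \<in> L_route p q" | "x2 \<in> {a..b}" "(x2, x2) \<in> L_route p q"
    unfolding pq L_route_eq_Times closed_segment_real_eq_atLeastAtMost by auto
  then show ?thesis
    by cases blast+
qed

lemma map_prod_image_L_route:
  "map_prod id \<phi> ` L_route p q = L_route (map_prod id \<phi> p) (map_prod id \<phi> q)"
  if "\<And>u v. \<phi> ` closed_segment u v = closed_segment (\<phi> u) (\<phi> v)"
  using that by (cases p; cases q) (simp add: L_route_eq_Times image_Un map_prod_image)

lemma L_route_meets_graph:
  fixes \<phi> :: "real \<Rightarrow> real" and p q :: pt
  assumes "inj \<phi>" and segment_image: "\<And>u v. \<phi> ` closed_segment u v = closed_segment (\<phi> u) (\<phi> v)"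
    and "\<phi> ` {c..e} = {a..b}" "\<phi> ` {c<..<e} = {a<..<b}"
    and "p \<notin> {a<..<b} \<times> {c<..<e}" "q \<notin> {a<..<b} \<times> {c<..<e}"
    and "L_route p q \<inter> ({a<..<b} \<times> {c<..<e}) \<noteq> {}"
    and "L_route q p \<inter> ({a<..<b} \<times> {c<..<e}) \<noteq> {}"
  shows "L_route p q \<inter> (\<lambda>y. (\<phi> y, y)) ` {c..e} \<noteq> {}"
proof -
  \<comment> \<open>\<open>?F\<close> maps the box onto a square and the graph of \<open>\<phi>\<close> onto the diagonal of that square.\<close>
  let ?F = "map_prod id \<phi>"
  have "inj ?F"
    using \<open>inj \<phi>\<close> by (simp add: prod.inj_map)
  then have meets_iff: "X \<inter> Y \<noteq> {} \<longleftrightarrow> ?F ` X \<inter> ?F ` Y \<noteq> {}" for X Y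
    by (simp only: image_Int [OF \<open>inj ?F\<close>, symmetric] image_is_empty)
  have box: "?F ` ({a<..<b} \<times> {c<..<e}) = {a<..<b} \<times> {a<..<b}"
    using assms(4) by (simp add: map_prod_image)
  have diagonal: "?F ` (\<lambda>y. (\<phi> y, y)) ` {c..e} = (\<lambda>t. (t, t)) ` {a..b}"
    by (simp add: image_image flip: assms(3))
  have "L_route (?F p) (?F q) \<inter> (\<lambda>t. (t, t)) ` {a..b} \<noteq> {}"
  proof (rule L_route_meets_square_diagonal)
    show "?F p \<notin> {a<..<b} \<times> {a<..<b}" "?F q \<notin> {a<..<b} \<times> {a<..<b}"
      using assms(5,6) by (simp_all only: inj_image_mem_iff [OF \<open>inj ?F\<close>] not_False_eq_True flip: box)
    show "L_route (?F p) (?F q) \<inter> ({a<..<b} \<times> {a<..<b}) \<noteq> {}"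
      "L_route (?F q) (?F p) \<inter> ({a<..<b} \<times> {a<..<b}) \<noteq> {}"
      using assms(7,8)[THEN meets_iff[THEN iffD1]]
      by (simp_all add: box map_prod_image_L_route segment_image)
  qed
  then have "?F ` L_route p q \<inter> ?F ` (\<lambda>y. (\<phi> y, y)) ` {c..e} \<noteq> {}"
    unfolding diagonal by (simp add: map_prod_image_L_route segment_image)
  then show ?thesis
    by (subst meets_iff)
qed

section \<open>The diagonal is a minimum skeleton\<close>

lemma rect_eq_Times: "rect a b c e = {a..b} \<times> {c..e}"
  by (auto simp: rect_def)

lemma interior_rect: "interior (rect a b c e) = {a<..<b} \<times> {c<..<e}"
  by (simp add: rect_eq_Times interior_Times)

lemma skeleton_rect_graph:
  fixes \<phi> :: "real \<Rightarrow> real"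
  assumes "a < b" "c < e" "inj \<phi>" "\<And>u v. \<phi> ` closed_segment u v = closed_segment (\<phi> u) (\<phi> v)"
    and "{\<phi> c, \<phi> e} = {a, b}" and graph: "seg d = (\<lambda>y. (\<phi> y, y)) ` {c..e}"
  shows "skeleton (rect a b c e) {d}"
proof -
  have images: "\<phi> ` {c..e} = {a..b}" "\<phi> ` {c<..<e} = {a<..<b}"
    using interval_images_of_segment_map [of \<phi> c e a b] assms(1-5) by simp_all
  have "seg d \<subseteq> rect a b c e"
    using images(1) by (auto simp: graph rect_eq_Times)
  moreover have "path_set vs \<inter> seg d \<noteq> {}"
    if "p \<notin> interior (rect a b c e)" "q \<notin> interior (rect a b c e)"
      and meets: "\<forall>vs. short_L_path p q vs \<longrightarrow> path_set vs \<inter> interior (rect a b c e) \<noteq> {}"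
      and "short_L_path p q vs" for p q vs
  proof -
    obtain vs1 vs2 where "short_L_path p q vs1" "path_set vs1 = L_route p q"
      "short_L_path p q vs2" "path_set vs2 = L_route q p"
      by (rule short_L_paths_onto_L_routes)
    then have "L_route p q \<inter> interior (rect a b c e) \<noteq> {}" "L_route q p \<inter> interior (rect a b c e) \<noteq> {}"
      using meets [rule_format, of vs1] meets [rule_format, of vs2] by simp_all
    then have "L_route p q \<inter> seg d \<noteq> {}" "L_route q p \<inter> seg d \<noteq> {}"
      using L_route_meets_graph [OF assms(3,4) images, of p q] L_route_meets_graph [OF assms(3,4) images, of q p]
        that(1,2) by (simp_all add: graph interior_rect)
    then show ?thesis
      using short_L_path_covers_L_route [OF \<open>short_L_path p q vs\<close>] by blast
  qed
  ultimately show ?thesis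
    unfolding skeleton_def inside_def by auto
qed

lemma not_skeleton_rect_empty:
  assumes "a < b" "c < e"
  shows "\<not> skeleton (rect a b c e) {}"
proof
  assume skeleton: "skeleton (rect a b c e) {}"
  define y where "y = (c + e) / 2"
  let ?p = "(a, y)" and ?q = "(b, y)"
  have "((a + b) / 2, y) \<in> L_route ?p ?q \<inter> L_route ?q ?p"
    using assms by (simp add: L_route_eq_Times closed_segment_eq_real_ivl)
  moreover have "((a + b) / 2, y) \<in> interior (rect a b c e)"
    using assms by (simp add: interior_rect y_def)
  ultimately have "path_set vs \<inter> interior (rect a b c e) \<noteq> {}" if "short_L_path ?p ?q vs" for vs
    using short_L_path_covers_L_route [OF that] by blast
  moreover have "?p \<notin> interior (rect a b c e)" "?q \<notin> interior (rect a b c e)"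
    by (simp_all add: interior_rect)
  moreover obtain vs where "short_L_path ?p ?q vs"
    using short_L_paths_onto_L_routes by blast
  ultimately show False
    using skeleton unfolding skeleton_def by blast
qed

lemma diagonal_eq_affine_graph:
  fixes a b c e :: real
  assumes "a < b" "c < e" "d \<in> {((a, c), (b, e)), ((a, e), (b, c))}"
  obtains \<alpha> \<beta> where "\<beta> \<noteq> 0" "{\<alpha> + \<beta> * c, \<alpha> + \<beta> * e} = {a, b}"
    "seg d = (\<lambda>y. (\<alpha> + \<beta> * y, y)) ` {c..e}"
proof -
  have graph: "(\<lambda>y. (\<alpha> + \<beta> * y, y)) ` {c..e} = closed_segment (\<alpha> + \<beta> * c, c) (\<alpha> + \<beta> * e, e)"
    for \<alpha> \<beta> :: real
  proof -
    have "linear (\<lambda>y. (\<beta> * y, y))"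
      by (rule linearI) (simp_all add: algebra_simps)
    then show ?thesis
      using affine_image_closed_segment [of "\<lambda>y. (\<beta> * y, y)" "(\<alpha>, 0)" c e] \<open>c < e\<close>
      by (simp add: closed_segment_eq_real_ivl1)
  qed
  define k where "k = (b - a) / (e - c)"
  have "k \<noteq> 0" "k * (e - c) = b - a"
    using assms(1,2) by (simp_all add: k_def)
  from assms(3) consider "d = ((a, c), (b, e))" | "d = ((a, e), (b, c))"
    by blast
  then show ?thesis
  proof cases
    case 1
    let ?\<alpha> = "a - k * c"
    have ends: "?\<alpha> + k * c = a" "?\<alpha> + k * e = b"
      using \<open>k * (e - c) = b - a\<close> by (simp_all add: algebra_simps)
    have "seg d = (\<lambda>y. (?\<alpha> + k * y, y)) ` {c..e}"
      unfolding graph ends by (simp add: 1 seg_def)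
    with \<open>k \<noteq> 0\<close> ends show ?thesis
      by (intro that [of k ?\<alpha>]) simp_all
  next
    case 2
    let ?\<alpha> = "b + k * c"
    have ends: "?\<alpha> + - k * c = b" "?\<alpha> + - k * e = a"
      using \<open>k * (e - c) = b - a\<close> by (simp_all add: algebra_simps)
    have "seg d = (\<lambda>y. (?\<alpha> + - k * y, y)) ` {c..e}"
      unfolding graph ends by (simp add: 2 seg_def closed_segment_commute)
    with \<open>k \<noteq> 0\<close> ends show ?thesis
      by (intro that [of "- k" ?\<alpha>]) (simp_all add: insert_commute)
  qed
qed

theorem corollary1:
  fixes a b c e :: real and d :: "pt \<times> pt"
  assumes "a < b" and "c < e"
    and "d \<in> {((a, c), (b, e)), ((a, e), (b, c))}"
  shows "minimum_skeleton (rect a b c e) {d}"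
proof -
  obtain \<alpha> \<beta> where diagonal: "\<beta> \<noteq> 0" "{\<alpha> + \<beta> * c, \<alpha> + \<beta> * e} = {a, b}"
    "seg d = (\<lambda>y. (\<alpha> + \<beta> * y, y)) ` {c..e}"
    by (rule diagonal_eq_affine_graph [OF assms])
  have "inj (\<lambda>y. \<alpha> + \<beta> * y)"
    using \<open>\<beta> \<noteq> 0\<close> by (simp add: inj_on_def)
  then have "skeleton (rect a b c e) {d}"
    by (rule skeleton_rect_graph [OF assms(1,2) _ affine_real_image_closed_segment diagonal(2,3)])
  moreover have "card {d} \<le> card S" if "finite S" "skeleton (rect a b c e) S" for S
  proof -
    have "S \<noteq> {}"
      using that(2) not_skeleton_rect_empty [OF assms(1,2)] by auto
    then show ?thesis
      using that(1) by (simp add: Suc_leI card_gt_0_iff)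
  qed
  ultimately show ?thesis
    unfolding minimum_skeleton_def by auto
qed

end
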